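(* If $G$ is a cubic (3-regular) graph, then $\mathrm{TC}_2(G)=3$ and $\mathrm{TC}_3(G)=2$.
   Context: All graphs are finite, simple and connected. $N(v)$ denotes the open neighborhood of $v$. For $\delta(G)\ge k$, a set $S\subseteq V(G)$ is a total $k$-dominating set if $|N(v)\cap S|\ge k$ for every $v\in V(G)$. Two disjoint sets $U,W\subseteq V(G)$ form a total $k$-coalition if neither is a total $k$-dominating set but $U\cup W$ is. A total $k$-coalition partition of $G$ is a partition $\Omega$ of $V(G)$ in which every set forms a total $k$-coalition with some other set of $\Omega$; $\mathrm{TC}_k(G)$ is the maximum cardinality of such a partition. *)

theory Defs
  imports Main
begin

definition simple_graph :: "'a set \<Rightarrow> ('a \<Rightarrow> 'a \<Rightarrow> bool) \<Rightarrow> bool" where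
  "simple_graph V E \<longleftrightarrow> finite V \<and> V \<noteq> {} \<and>
     (\<forall>x y. E x y \<longrightarrow> x \<in> V \<and> y \<in> V) \<and>
     (\<forall>x y. E x y \<longrightarrow> E y x) \<and> (\<forall>x. \<not> E x x)"

definition connected_graph :: "'a set \<Rightarrow> ('a \<Rightarrow> 'a \<Rightarrow> bool) \<Rightarrow> bool" where
  "connected_graph V E \<longleftrightarrow> simple_graph V E \<and> (\<forall>x\<in>V. \<forall>y\<in>V. E\<^sup>*\<^sup>* x y)"

definition nbhd :: "'a set \<Rightarrow> ('a \<Rightarrow> 'a \<Rightarrow> bool) \<Rightarrow> 'a \<Rightarrow> 'a set" where
  "nbhd V E v = {u \<in> V. E v u}"

definition cubic :: "'a set \<Rightarrow> ('a \<Rightarrow> 'a \<Rightarrow> bool) \<Rightarrow> bool" where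
  "cubic V E \<longleftrightarrow> (\<forall>v\<in>V. card (nbhd V E v) = 3)"

definition total_k_dominating :: "'a set \<Rightarrow> ('a \<Rightarrow> 'a \<Rightarrow> bool) \<Rightarrow> nat \<Rightarrow> 'a set \<Rightarrow> bool" where
  "total_k_dominating V E k S \<longleftrightarrow> S \<subseteq> V \<and> (\<forall>v\<in>V. card (nbhd V E v \<inter> S) \<ge> k)"

definition total_k_coalition :: "'a set \<Rightarrow> ('a \<Rightarrow> 'a \<Rightarrow> bool) \<Rightarrow> nat \<Rightarrow> 'a set \<Rightarrow> 'a set \<Rightarrow> bool" where
  "total_k_coalition V E k U W \<longleftrightarrow> U \<inter> W = {} \<and>
     \<not> total_k_dominating V E k U \<and> \<not> total_k_dominating V E k W \<and>
     total_k_dominating V E k (U \<union> W)"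

definition is_partition :: "'a set \<Rightarrow> 'a set set \<Rightarrow> bool" where
  "is_partition V P \<longleftrightarrow> (\<forall>A\<in>P. A \<noteq> {}) \<and> \<Union>P = V \<and>
     (\<forall>A\<in>P. \<forall>B\<in>P. A \<noteq> B \<longrightarrow> A \<inter> B = {})"

definition total_k_coalition_partition :: "'a set \<Rightarrow> ('a \<Rightarrow> 'a \<Rightarrow> bool) \<Rightarrow> nat \<Rightarrow> 'a set set \<Rightarrow> bool" where
  "total_k_coalition_partition V E k P \<longleftrightarrow> is_partition V P \<and>
     (\<forall>A\<in>P. \<exists>B\<in>P. B \<noteq> A \<and> total_k_coalition V E k A B)"

definition TC :: "'a set \<Rightarrow> ('a \<Rightarrow> 'a \<Rightarrow> bool) \<Rightarrow> nat \<Rightarrow> nat" where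
  "TC V E k = Max {card P | P. total_k_coalition_partition V E k P}"

end

theory Submission
  imports Defs
begin

text \<open>Every neighbourhood of a cubic graph has three vertices. Two disjoint total 2-dominating
  sets would need 2 + 2 of them in one neighbourhood, so the unions of any two total 2-coalitions
  share a class. With four classes, some non-dominating class D would therefore form total
  2-dominating unions with three further classes; at a vertex where D sees at most one neighbour
  these would need at least 1 + 3 neighbours. A total 3-dominating set contains every
  neighbourhood, hence all of V, so a single 3-coalition already exhausts the partition. The
  partitions {{x}, {y}, V - {x, y}} and {{x}, V - {x}}, for neighbours x, y of some vertex,
  attain the bounds.\<close>

lemma finite_nbhd: "simple_graph V E \<Longrightarrow> finite (nbhd V E v)"
  unfolding simple_graph_def nbhd_def by auto

lemma nbhd_subset: "nbhd V E v \<subseteq> V"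
  unfolding nbhd_def by auto

lemma total_k_dominatingD:
  "total_k_dominating V E k S \<Longrightarrow> v \<in> V \<Longrightarrow> k \<le> card (nbhd V E v \<inter> S)"
  unfolding total_k_dominating_def by auto

lemma total_k_coalition_commute:
  "total_k_coalition V E k U W \<longleftrightarrow> total_k_coalition V E k W U"
  unfolding total_k_coalition_def by (auto simp: Un_commute)

lemma partition_disjoint:
  "is_partition V P \<Longrightarrow> A \<in> P \<Longrightarrow> B \<in> P \<Longrightarrow> A \<noteq> B \<Longrightarrow> A \<inter> B = {}"
  unfolding is_partition_def by auto

lemma card_Int_Un_disjoint:
  "finite N \<Longrightarrow> X \<inter> Y = {} \<Longrightarrow> card (N \<inter> (X \<union> Y)) = card (N \<inter> X) + card (N \<inter> Y)"
  by (simp add: Int_Un_distrib card_Un_disjoint disjoint_iff)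

lemma TC_eqI:
  assumes "\<And>P. total_k_coalition_partition V E k P \<Longrightarrow> card P \<le> n"
    and "total_k_coalition_partition V E k P\<^sub>0" and "card P\<^sub>0 = n"
  shows "TC V E k = n"
  unfolding TC_def
proof (rule Max_eqI)
  show "finite {card P |P. total_k_coalition_partition V E k P}"
    by (rule finite_subset[of _ "{..n}"]) (auto dest: assms(1))
qed (use assms in auto)

lemma disjoint_total_k_dominating_False:
  assumes G: "simple_graph V E" and deg: "\<forall>v\<in>V. card (nbhd V E v) < 2 * k"
    and "X \<inter> Y = {}" and "total_k_dominating V E k X" and "total_k_dominating V E k Y"
  shows False
proof -
  obtain v where v: "v \<in> V"
    using G unfolding simple_graph_def by auto
  let ?N = "nbhd V E v"
  have "card (?N \<inter> X) + card (?N \<inter> Y) = card (?N \<inter> (X \<union> Y))"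
    using card_Int_Un_disjoint[OF finite_nbhd[OF G] \<open>X \<inter> Y = {}\<close>] by simp
  also have "\<dots> \<le> card ?N"
    by (simp add: card_mono finite_nbhd[OF G])
  finally show False
    using deg v total_k_dominatingD[OF assms(4) v] total_k_dominatingD[OF assms(5) v] by fastforce
qed

lemma total_k_coalitions_meet:
  assumes G: "simple_graph V E" and deg: "\<forall>v\<in>V. card (nbhd V E v) < 2 * k"
    and P: "is_partition V P" and "X \<in> P" "Y \<in> P" "Z \<in> P" "W \<in> P"
    and "total_k_coalition V E k X Y" and "total_k_coalition V E k Z W"
  shows "{X, Y} \<inter> {Z, W} \<noteq> {}"
proof
  assume "{X, Y} \<inter> {Z, W} = {}"
  then have "(X \<union> Y) \<inter> (Z \<union> W) = {}"
    using partition_disjoint[OF P] assms(4-7) by blast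
  then show False
    using disjoint_total_k_dominating_False[OF G deg] assms(8,9)
    unfolding total_k_coalition_def by blast
qed

lemma three_disjoint_completions_False:
  assumes G: "simple_graph V E" and deg: "\<forall>v\<in>V. card (nbhd V E v) < k + 2"
    and D: "\<not> total_k_dominating V E k D"
    and disj: "D \<inter> X\<^sub>1 = {}" "D \<inter> X\<^sub>2 = {}" "D \<inter> X\<^sub>3 = {}"
      "X\<^sub>1 \<inter> X\<^sub>2 = {}" "X\<^sub>1 \<inter> X\<^sub>3 = {}" "X\<^sub>2 \<inter> X\<^sub>3 = {}"
    and dom: "total_k_dominating V E k (D \<union> X\<^sub>1)" "total_k_dominating V E k (D \<union> X\<^sub>2)"
      "total_k_dominating V E k (D \<union> X\<^sub>3)"
  shows False
proof -
  have "D \<subseteq> V"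
    using dom(1) unfolding total_k_dominating_def by auto
  then obtain v where v: "v \<in> V" and few: "card (nbhd V E v \<inter> D) < k"
    using D unfolding total_k_dominating_def by force
  let ?N = "nbhd V E v"
  have fin: "finite ?N"
    by (rule finite_nbhd[OF G])
  have "k \<le> card (?N \<inter> D) + card (?N \<inter> X\<^sub>1)" "k \<le> card (?N \<inter> D) + card (?N \<inter> X\<^sub>2)"
    "k \<le> card (?N \<inter> D) + card (?N \<inter> X\<^sub>3)"
    using dom[THEN total_k_dominatingD, OF v] card_Int_Un_disjoint[OF fin] disj(1-3) by metis+
  moreover have "card (?N \<inter> (D \<union> X\<^sub>1 \<union> X\<^sub>2 \<union> X\<^sub>3))
      = card (?N \<inter> D) + card (?N \<inter> X\<^sub>1) + card (?N \<inter> X\<^sub>2) + card (?N \<inter> X\<^sub>3)"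
  proof -
    have "(D \<union> X\<^sub>1 \<union> X\<^sub>2) \<inter> X\<^sub>3 = {}" "(D \<union> X\<^sub>1) \<inter> X\<^sub>2 = {}"
      using disj by blast+
    then show ?thesis
      using disj(1) by (simp add: card_Int_Un_disjoint[OF fin])
  qed
  moreover have "card (?N \<inter> (D \<union> X\<^sub>1 \<union> X\<^sub>2 \<union> X\<^sub>3)) \<le> card ?N"
    by (simp add: card_mono fin)
  ultimately show False
    using few deg v by fastforce
qed

lemma total_k_coalition_partition_outside_pair:
  assumes G: "simple_graph V E" and deg: "\<forall>v\<in>V. card (nbhd V E v) < k + 2" and "2 \<le> k"
    and "total_k_coalition_partition V E k P"
    and AB: "A \<in> P" "B \<in> P" "total_k_coalition V E k A B"
    and C: "C \<in> P - {A, B}" and C': "C' \<in> P - {A, B}"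
  shows "C = C'"
proof (rule ccontr)
  assume "C \<noteq> C'"
  have P: "is_partition V P" and partner: "\<And>C. C \<in> P \<Longrightarrow> \<exists>D\<in>P. total_k_coalition V E k C D"
    using assms(4) unfolding total_k_coalition_partition_def by auto
  have "\<forall>v\<in>V. card (nbhd V E v) < 2 * k"
    using deg \<open>2 \<le> k\<close> by fastforce
  note meet = total_k_coalitions_meet[OF G this P]
  have partner_AB: "\<exists>D\<in>P \<inter> {A, B}. total_k_coalition V E k X D" if X: "X \<in> P - {A, B}" for X
  proof -
    obtain D where D: "D \<in> P" "total_k_coalition V E k X D"
      using partner X by blast
    then have "{X, D} \<inter> {A, B} \<noteq> {}"
      using meet[of X D A B] X AB by blast
    then show ?thesis
      using X D by auto
  qed
  obtain D D' where D: "D \<in> P \<inter> {A, B}" "total_k_coalition V E k C D"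
    and D': "D' \<in> P \<inter> {A, B}" "total_k_coalition V E k C' D'"
    using partner_AB C C' by meson
  have "{C, D} \<inter> {C', D'} \<noteq> {}"
    using meet[of C D C' D'] C C' D D' by blast
  then have "D' = D"
    using \<open>C \<noteq> C'\<close> C C' D D' by auto
  obtain Q where Q: "Q \<in> P \<inter> {A, B}" "total_k_coalition V E k D Q"
  proof (cases "D = A")
    case True
    then show ?thesis
      using that AB by blast
  next
    case False
    then show ?thesis
      using that[of A] AB D(1) total_k_coalition_commute by blast
  qed
  show False
  proof (rule three_disjoint_completions_False[OF G deg, of D C C' Q])
    show "\<not> total_k_dominating V E k D"
      using D(2) unfolding total_k_coalition_def by auto
    show "total_k_dominating V E k (D \<union> C)" "total_k_dominating V E k (D \<union> C')"
      "total_k_dominating V E k (D \<union> Q)"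
      using D(2) D'(2) Q(2) \<open>D' = D\<close> unfolding total_k_coalition_def by (auto simp: Un_commute)
    have "Q \<noteq> D"
      using Q(2) unfolding total_k_coalition_def by auto
    then show "D \<inter> C = {}" "D \<inter> C' = {}" "D \<inter> Q = {}" "C \<inter> C' = {}" "C \<inter> Q = {}" "C' \<inter> Q = {}"
      using partition_disjoint[OF P] C C' D(1) Q(1) \<open>C \<noteq> C'\<close> by auto
  qed
qed

lemma total_k_coalition_partition_card_le_3:
  assumes G: "simple_graph V E" and deg: "\<forall>v\<in>V. card (nbhd V E v) < k + 2" and "2 \<le> k"
    and "total_k_coalition_partition V E k P"
  shows "card P \<le> 3"
proof (cases "P = {}")
  case False
  have P: "is_partition V P" and partner: "\<And>C. C \<in> P \<Longrightarrow> \<exists>D\<in>P. total_k_coalition V E k C D"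
    using assms(4) unfolding total_k_coalition_partition_def by auto
  have "finite (\<Union>P)"
    using P G unfolding is_partition_def simple_graph_def by simp
  then have "finite P"
    by (rule finite_UnionD)
  obtain A where "A \<in> P"
    using False by auto
  then obtain B where AB: "A \<in> P" "B \<in> P" "total_k_coalition V E k A B"
    using partner by blast
  have "card (P - {A, B}) \<le> 1"
    using \<open>finite P\<close> total_k_coalition_partition_outside_pair[OF assms AB]
    by (metis One_nat_def card_le_Suc0_iff_eq finite_Diff)
  have "card P \<le> card ({A, B} \<union> (P - {A, B}))"
    using \<open>finite P\<close> by (intro card_mono) auto
  also have "\<dots> \<le> card {A, B} + card (P - {A, B})"
    by (rule card_Un_le)
  also have "\<dots> \<le> 2 + 1"
    using \<open>card (P - {A, B}) \<le> 1\<close> by (intro add_mono) (auto simp: card_insert_if)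
  finally show ?thesis
    by simp
qed simp

lemma total_k_dominating_regular_eq_V:
  assumes G: "simple_graph V E" and reg: "\<forall>v\<in>V. card (nbhd V E v) = k" and "0 < k"
    and S: "total_k_dominating V E k S"
  shows "S = V"
proof
  show "S \<subseteq> V"
    using S unfolding total_k_dominating_def by auto
  show "V \<subseteq> S"
  proof
    fix u
    assume u: "u \<in> V"
    then have "nbhd V E u \<noteq> {}"
      using reg \<open>0 < k\<close> by fastforce
    then obtain w where "w \<in> nbhd V E u"
      by blast
    then have w: "w \<in> V" "u \<in> nbhd V E w"
      using G u unfolding nbhd_def simple_graph_def by auto
    have "card (nbhd V E w) \<le> card (nbhd V E w \<inter> S)"
      using total_k_dominatingD[OF S w(1)] reg w(1) by simp
    then have "nbhd V E w \<inter> S = nbhd V E w"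
      by (intro card_seteq finite_nbhd[OF G]) auto
    then show "u \<in> S"
      using w(2) by blast
  qed
qed

lemma total_k_coalition_partition_card_le_2:
  assumes G: "simple_graph V E" and reg: "\<forall>v\<in>V. card (nbhd V E v) = k" and "0 < k"
    and "total_k_coalition_partition V E k P"
  shows "card P \<le> 2"
proof (cases "P = {}")
  case False
  have P: "is_partition V P" and partner: "\<And>C. C \<in> P \<Longrightarrow> \<exists>D\<in>P. D \<noteq> C \<and> total_k_coalition V E k C D"
    using assms(4) unfolding total_k_coalition_partition_def by auto
  obtain A where "A \<in> P"
    using False by auto
  then obtain B where AB: "A \<in> P" "B \<in> P" "total_k_coalition V E k A B"
    using partner by blast
  then have "A \<union> B = V"
    using total_k_dominating_regular_eq_V[OF G reg \<open>0 < k\<close>] unfolding total_k_coalition_def by blast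
  have "P \<subseteq> {A, B}"
  proof
    fix C
    assume C: "C \<in> P"
    show "C \<in> {A, B}"
    proof (rule ccontr)
      assume "C \<notin> {A, B}"
      then have "C \<inter> V = {}"
        using partition_disjoint[OF P] C AB \<open>A \<union> B = V\<close> by blast
      moreover have "C \<subseteq> V" "C \<noteq> {}"
        using P C unfolding is_partition_def by auto
      ultimately show False
        by blast
    qed
  qed
  then have "card P \<le> card {A, B}"
    by (intro card_mono) auto
  also have "\<dots> \<le> 2"
    by (cases "A = B") auto
  finally show ?thesis .
qed simp

lemma total_k_dominating_Diff_singleton:
  assumes G: "simple_graph V E" and deg: "\<forall>v\<in>V. k < card (nbhd V E v)"
  shows "total_k_dominating V E k (V - {y})"
  unfolding total_k_dominating_def
proof (intro conjI ballI)
  fix u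
  assume u: "u \<in> V"
  have "nbhd V E u \<inter> (V - {y}) = nbhd V E u - {y}"
    using nbhd_subset[of V E u] by blast
  moreover have "card (nbhd V E u) - 1 \<le> card (nbhd V E u - {y})"
    using diff_card_le_card_Diff[of "{y}" "nbhd V E u"] by simp
  ultimately show "k \<le> card (nbhd V E u \<inter> (V - {y}))"
    using deg u by fastforce
qed auto

lemma total_k_dominating_V:
  assumes "\<forall>v\<in>V. k \<le> card (nbhd V E v)"
  shows "total_k_dominating V E k V"
  using assms nbhd_subset[of V E] unfolding total_k_dominating_def by (simp add: Int_absorb2)

lemma not_total_k_dominating_singleton:
  assumes "1 < k" and "V \<noteq> {}"
  shows "\<not> total_k_dominating V E k {x}"
proof
  assume dom: "total_k_dominating V E k {x}"
  obtain v where "v \<in> V"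
    using assms(2) by auto
  have "card (nbhd V E v \<inter> {x}) \<le> 1"
    by (simp add: card_le_Suc0_iff_eq)
  then show False
    using total_k_dominatingD[OF dom \<open>v \<in> V\<close>] assms(1) by simp
qed

lemma cubic_obtain_nbhd:
  assumes G: "simple_graph V E" and "cubic V E"
  obtains v x y z where "v \<in> V" "nbhd V E v = {x, y, z}" "x \<noteq> y" "v \<notin> {x, y, z}"
proof -
  obtain v where v: "v \<in> V"
    using G unfolding simple_graph_def by auto
  then obtain x y z where "nbhd V E v = {x, y, z}" "x \<noteq> y" "x \<noteq> z" "y \<noteq> z"
    using \<open>cubic V E\<close> unfolding cubic_def card_3_iff by blast
  moreover have "v \<notin> nbhd V E v"
    using G unfolding simple_graph_def nbhd_def by auto
  ultimately show ?thesis
    using that v by auto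
qed

lemma cubic_total_2_coalition_partition:
  assumes G: "simple_graph V E" and cub: "cubic V E"
    and v: "v \<in> V" "nbhd V E v = {x, y, z}" "x \<noteq> y" "v \<notin> {x, y, z}"
  defines "R \<equiv> V - {x, y}"
  shows "total_k_coalition_partition V E 2 {{x}, {y}, R}" and "card {{x}, {y}, R} = 3"
proof -
  have xy: "x \<in> V" "y \<in> V"
    using v(2) nbhd_subset[of V E v] by auto
  have deg: "\<forall>u\<in>V. 2 < card (nbhd V E u)"
    using cub unfolding cubic_def by simp
  have "nbhd V E v \<inter> R \<subseteq> {z}"
    using v(2) unfolding R_def by auto
  then have "card (nbhd V E v \<inter> R) \<le> card {z}"
    by (intro card_mono) auto
  have R: "\<not> total_k_dominating V E 2 R"
  proof
    assume "total_k_dominating V E 2 R"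
    from total_k_dominatingD[OF this v(1)] show False
      using \<open>card (nbhd V E v \<inter> R) \<le> card {z}\<close> by simp
  qed
  have single: "\<not> total_k_dominating V E 2 {u}" for u
    by (rule not_total_k_dominating_singleton) (use v(1) in auto)
  have R_ne: "R \<noteq> {}" "{x} \<noteq> R" "{y} \<noteq> R"
    using v unfolding R_def by auto
  have "{x} \<inter> R = {}" "{x} \<union> R = V - {y}" "{y} \<inter> R = {}" "{y} \<union> R = V - {x}"
    using xy v(3) unfolding R_def by auto
  then have xR: "total_k_coalition V E 2 {x} R" and yR: "total_k_coalition V E 2 {y} R"
    using total_k_dominating_Diff_singleton[OF G deg] single R
    unfolding total_k_coalition_def by simp_all
  have "is_partition V {{x}, {y}, R}"
    using xy v(3) R_ne(1) unfolding is_partition_def R_def by auto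
  then show "total_k_coalition_partition V E 2 {{x}, {y}, R}"
    using xR yR total_k_coalition_commute[of V E 2 "{x}" R] R_ne(2,3) v(3)
    unfolding total_k_coalition_partition_def by auto
  show "card {{x}, {y}, R} = 3"
    using R_ne v(3) by simp
qed

lemma cubic_total_3_coalition_partition:
  assumes cub: "cubic V E"
    and v: "v \<in> V" "nbhd V E v = {x, y, z}" "v \<noteq> x"
  shows "total_k_coalition_partition V E 3 {{x}, V - {x}}" and "card {{x}, V - {x}} = 2"
proof -
  have x: "x \<in> V"
    using v(2) nbhd_subset[of V E v] by auto
  have "nbhd V E v \<inter> (V - {x}) \<subseteq> {y, z}"
    using v(2) by auto
  then have "card (nbhd V E v \<inter> (V - {x})) \<le> card {y, z}"
    by (intro card_mono) auto
  also have "\<dots> \<le> 2"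
    by (cases "y = z") auto
  finally have "card (nbhd V E v \<inter> (V - {x})) \<le> 2" .
  have R: "\<not> total_k_dominating V E 3 (V - {x})"
  proof
    assume "total_k_dominating V E 3 (V - {x})"
    from total_k_dominatingD[OF this v(1)] show False
      using \<open>card (nbhd V E v \<inter> (V - {x})) \<le> 2\<close> by simp
  qed
  have "total_k_dominating V E 3 ({x} \<union> (V - {x}))"
    using total_k_dominating_V[of V 3 E] cub x unfolding cubic_def by (simp add: insert_absorb)
  moreover have "\<not> total_k_dominating V E 3 {x}"
    by (rule not_total_k_dominating_singleton) (use v(1) in auto)
  ultimately have "total_k_coalition V E 3 {x} (V - {x})"
    using R unfolding total_k_coalition_def by auto
  moreover have "V - {x} \<noteq> {}" "{x} \<noteq> V - {x}"
    using v by auto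
  moreover have "total_k_coalition V E 3 (V - {x}) {x}"
    using calculation(1) total_k_coalition_commute[of V E 3 "{x}" "V - {x}"] by blast
  ultimately show "total_k_coalition_partition V E 3 {{x}, V - {x}}"
    using x unfolding total_k_coalition_partition_def is_partition_def by auto
  show "card {{x}, V - {x}} = 2"
    using \<open>{x} \<noteq> V - {x}\<close> by simp
qed

theorem theorem3p6:
  fixes V :: "'a set" and E :: "'a \<Rightarrow> 'a \<Rightarrow> bool"
  assumes "connected_graph V E" and "cubic V E"
  shows "TC V E 2 = 3 \<and> TC V E 3 = 2"
proof -
  have G: "simple_graph V E"
    using assms(1) unfolding connected_graph_def by auto
  have deg: "\<forall>v\<in>V. card (nbhd V E v) = 3"
    using assms(2) unfolding cubic_def .
  obtain v x y z where v: "v \<in> V" "nbhd V E v = {x, y, z}" "x \<noteq> y" "v \<notin> {x, y, z}"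
    by (rule cubic_obtain_nbhd[OF G assms(2)])
  have "v \<noteq> x"
    using v(4) by simp
  have "\<forall>v\<in>V. card (nbhd V E v) < 2 + 2"
    using deg by simp
  have "TC V E 2 = 3"
    by (rule TC_eqI[OF total_k_coalition_partition_card_le_3[OF G \<open>\<forall>v\<in>V. _ < 2 + 2\<close> order_refl]
          cubic_total_2_coalition_partition[OF G assms(2) v]])
  moreover have "TC V E 3 = 2"
    by (rule TC_eqI[OF total_k_coalition_partition_card_le_2[OF G deg zero_less_numeral]
          cubic_total_3_coalition_partition[OF assms(2) v(1,2) \<open>v \<noteq> x\<close>]])
  ultimately show ?thesis ..
qed

end
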